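(* Let $I$ be a finite or infinite non-empty index set and let $\mathbb{K}$ be a positive commutative monoid such that the inner consistency property holds for $\mathbb{K}$-relations via a join operation $\bowtie_{\mathbb{K}}$. Then the inner consistency property holds for $\mathbb{K}^I_{\mathrm{fin}}$-relations via the component-wise join operation $\bowtie^I_{\mathbb{K}}$. Furthermore, if $\bowtie_{\mathbb{K}}$ produces $c$-sparse witnesses for some positive real $c$, then for $\mathbb{K}^I_{\mathrm{fin}}$-relations $R,S$ the witness $R\bowtie^I_{\mathbb{K}}S$ is $cd$-sparse, where $d$ is any bound on the number of non-zero components of the annotation of any tuple in the supports of $R$ or $S$. In particular, if $I$ is finite and the inner consistency property holds for $\mathbb{K}$-relations with sparse witnesses, then the inner consistency property holds for $\mathbb{K}^I$-relations with sparse witnesses.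
   Context: Positive: $p+q=0\Rightarrow p=q=0$. $\mathbb{K}^I$: maps $I\to K$ with pointwise addition; $\mathbb{K}^I_{\mathrm{fin}}$: those with finitely many non-zero values. For a finite attribute set $X$ (attributes have domains), a $\mathbb{M}$-relation over $X$ is a map $R$ from $X$-tuples to the monoid's universe with finite support $R'=\{t:R(t)\ne0\}$; $t[Y]$ is restriction; marginals $R[Y](t)=\sum_{r\in R',r[Y]=t}R(r)$. $R(X),S(Y)$ are inner consistent if $R[X\cap Y]=S[X\cap Y]$; a $W$ over $X\cup Y$ witnesses their consistency if $W[X]=R$, $W[Y]=S$. A join operation assigns to each pair of inner consistent $\mathbb{K}$-relations $R(X),S(Y)$ a $\mathbb{K}$-relation $R\bowtie_{\mathbb{K}}S$ over $X\cup Y$; the inner consistency property holds via it if $R\bowtie_{\mathbb{K}}S$ always witnesses consistency of $R,S$. It produces $c$-sparse witnesses if moreover $|(R\bowtie_{\mathbb{K}}S)'|\le(|R'|+|S'|)c$ always. The inner consistency property holds with sparse witnesses if there is $c>0$ such that any two inner consistent relations have a witness $W$ with $|W'|\le(|R'|+|S'|)c$. Component-wise join: for inner consistent $\mathbb{K}^I_{\mathrm{fin}}$-relations $R(X),S(Y)$, take a fresh attribute $C$ with domain $I$, define $\mathbb{K}$-relations $R_0(X\cup\{C\})$, $S_0(Y\cup\{C\})$ by $R_0(r,i)=R(r)(i)$, $S_0(s,i)=S(s)(i)$, and let $(R\bowtie^I_{\mathbb{K}}S)(t)(i)=(R_0\bowtie_{\mathbb{K}}S_0)(t,i)$ for $X\cup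 Y$-tuples $t$ and $i\in I$. *)

theory Defs
  imports "HOL-Library.FuncSet" "HOL-Library.Function_Algebras" Complex_Main
begin

text \<open>Attributes have type 'a, attribute values type 'v, and D assigns to each
attribute its domain. An X-tuple is an extensional function in PiE X D.\<close>

definition supp :: "(('a \<Rightarrow> 'v) \<Rightarrow> 'm::zero) \<Rightarrow> ('a \<Rightarrow> 'v) set" where
  "supp R = {t. R t \<noteq> 0}"

definition is_rel :: "('a \<Rightarrow> 'v set) \<Rightarrow> 'm::zero set \<Rightarrow> 'a set \<Rightarrow> (('a \<Rightarrow> 'v) \<Rightarrow> 'm) \<Rightarrow> bool" where
  "is_rel D A X R \<longleftrightarrow> finite (supp R) \<and> (\<forall>t. R t \<noteq> 0 \<longrightarrow> t \<in> PiE X D) \<and> (\<forall>t. R t \<in> A)"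

definition marg :: "(('a \<Rightarrow> 'v) \<Rightarrow> 'm::comm_monoid_add) \<Rightarrow> 'a set \<Rightarrow> ('a \<Rightarrow> 'v) \<Rightarrow> 'm" where
  "marg R Y t = (\<Sum>r \<in> {r \<in> supp R. restrict r Y = t}. R r)"

definition inner_cons :: "'a set \<Rightarrow> 'a set \<Rightarrow> (('a \<Rightarrow> 'v) \<Rightarrow> 'm::comm_monoid_add) \<Rightarrow> (('a \<Rightarrow> 'v) \<Rightarrow> 'm) \<Rightarrow> bool" where
  "inner_cons X Y R S \<longleftrightarrow> marg R (X \<inter> Y) = marg S (X \<inter> Y)"

definition witness :: "('a \<Rightarrow> 'v set) \<Rightarrow> 'm::comm_monoid_add set \<Rightarrow> 'a set \<Rightarrow> 'a set
    \<Rightarrow> (('a \<Rightarrow> 'v) \<Rightarrow> 'm) \<Rightarrow> (('a \<Rightarrow> 'v) \<Rightarrow> 'm) \<Rightarrow> (('a \<Rightarrow> 'v) \<Rightarrow> 'm) \<Rightarrow> bool" where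
  "witness D A X Y R S W \<longleftrightarrow> is_rel D A (X \<union> Y) W \<and> marg W X = R \<and> marg W Y = S"

definition positive_monoid :: "'m::comm_monoid_add itself \<Rightarrow> bool" where
  "positive_monoid _ \<longleftrightarrow> (\<forall>p q::'m. p + q = 0 \<longrightarrow> p = 0 \<and> q = 0)"

definition icp_via :: "('a \<Rightarrow> 'v set) \<Rightarrow> 'm::comm_monoid_add set
    \<Rightarrow> ('a set \<Rightarrow> 'a set \<Rightarrow> (('a \<Rightarrow> 'v) \<Rightarrow> 'm) \<Rightarrow> (('a \<Rightarrow> 'v) \<Rightarrow> 'm) \<Rightarrow> (('a \<Rightarrow> 'v) \<Rightarrow> 'm)) \<Rightarrow> bool" where
  "icp_via D A J \<longleftrightarrow> (\<forall>X Y R S. finite X \<longrightarrow> finite Y \<longrightarrow> is_rel D A X R \<longrightarrow> is_rel D A Y S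
      \<longrightarrow> inner_cons X Y R S \<longrightarrow> witness D A X Y R S (J X Y R S))"

definition sparse_via :: "('a \<Rightarrow> 'v set) \<Rightarrow> 'm::comm_monoid_add set
    \<Rightarrow> ('a set \<Rightarrow> 'a set \<Rightarrow> (('a \<Rightarrow> 'v) \<Rightarrow> 'm) \<Rightarrow> (('a \<Rightarrow> 'v) \<Rightarrow> 'm) \<Rightarrow> (('a \<Rightarrow> 'v) \<Rightarrow> 'm)) \<Rightarrow> real \<Rightarrow> bool" where
  "sparse_via D A J c \<longleftrightarrow> (\<forall>X Y R S. finite X \<longrightarrow> finite Y \<longrightarrow> is_rel D A X R \<longrightarrow> is_rel D A Y S
      \<longrightarrow> inner_cons X Y R S
      \<longrightarrow> real (card (supp (J X Y R S))) \<le> (real (card (supp R)) + real (card (supp S))) * c)"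

definition icp_sparse :: "('a \<Rightarrow> 'v set) \<Rightarrow> 'm::comm_monoid_add set \<Rightarrow> bool" where
  "icp_sparse D A \<longleftrightarrow> (\<exists>c>0. \<forall>X Y R S. finite X \<longrightarrow> finite Y \<longrightarrow> is_rel D A X R \<longrightarrow> is_rel D A Y S
      \<longrightarrow> inner_cons X Y R S
      \<longrightarrow> (\<exists>W. witness D A X Y R S W \<and>
              real (card (supp W)) \<le> (real (card (supp R)) + real (card (supp S))) * c))"

text \<open>K^I (maps I \<rightarrow> K, represented as functions that vanish outside I) and
K^I_fin (those with finitely many non-zero values).\<close>
definition KI :: "'i set \<Rightarrow> ('i \<Rightarrow> 'k::zero) set" where
  "KI I = {f. \<forall>i. i \<notin> I \<longrightarrow> f i = 0}"

definition KI_fin :: "'i set \<Rightarrow> ('i \<Rightarrow> 'k::zero) set" where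
  "KI_fin I = {f \<in> KI I. finite {i. f i \<noteq> 0}}"

definition lift_rel :: "('a \<Rightarrow> 'v set) \<Rightarrow> 'a \<Rightarrow> 'a set \<Rightarrow> (('a \<Rightarrow> 'v) \<Rightarrow> ('v \<Rightarrow> 'k::zero))
    \<Rightarrow> ('a \<Rightarrow> 'v) \<Rightarrow> 'k" where
  "lift_rel D C X R = (\<lambda>t. if t \<in> PiE (insert C X) D then R (restrict t X) (t C) else 0)"

text \<open>Component-wise join using the fresh attribute C (whose domain is I).\<close>
definition cw_join :: "('a \<Rightarrow> 'v set) \<Rightarrow> 'v set
    \<Rightarrow> ('a set \<Rightarrow> 'a set \<Rightarrow> (('a \<Rightarrow> 'v) \<Rightarrow> 'k) \<Rightarrow> (('a \<Rightarrow> 'v) \<Rightarrow> 'k) \<Rightarrow> (('a \<Rightarrow> 'v) \<Rightarrow> 'k::zero))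
    \<Rightarrow> 'a \<Rightarrow> 'a set \<Rightarrow> 'a set \<Rightarrow> (('a \<Rightarrow> 'v) \<Rightarrow> ('v \<Rightarrow> 'k)) \<Rightarrow> (('a \<Rightarrow> 'v) \<Rightarrow> ('v \<Rightarrow> 'k))
    \<Rightarrow> ('a \<Rightarrow> 'v) \<Rightarrow> ('v \<Rightarrow> 'k)" where
  "cw_join D I J C X Y R S = (\<lambda>t. if t \<in> PiE (X \<union> Y) D then
      (\<lambda>i. if i \<in> I then J (insert C X) (insert C Y) (lift_rel D C X R) (lift_rel D C Y S) (t(C := i)) else 0)
    else 0)"

end

theory Submission
  imports Defs
begin

text \<open>A \<open>K\<^sup>I\<^sub>f\<^sub>i\<^sub>n\<close>-relation \<open>R\<close> over \<open>X\<close> carries the same information as the \<open>K\<close>-relation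
  \<open>R\<^sub>0\<close> over \<open>X \<union> {C}\<close>, the fresh attribute \<open>C\<close> recording the component, and this
  correspondence commutes with marginals: \<open>(R[Z])\<^sub>0 = R\<^sub>0[Z \<union> {C}]\<close>. Hence inner
  consistency of \<open>R, S\<close> transfers to \<open>R\<^sub>0, S\<^sub>0\<close>, and reading a witness of \<open>R\<^sub>0, S\<^sub>0\<close> back
  component-wise gives a witness of \<open>R, S\<close>. A tuple of \<open>R\<close> with at most \<open>d\<close> non-zero
  components gives at most \<open>d\<close> tuples of \<open>R\<^sub>0\<close>, and reading back never enlarges the support,
  which yields the sparsity bound.\<close>

lemma sum_fun_apply: "(sum f A) x = (\<Sum>a\<in>A. f a x)"
  by (induction A rule: infinite_finite_induct) auto

lemma marg_apply: "marg W Z t i = (\<Sum>r\<in>{r \<in> supp W. restrict r Z = t}. W r i)"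
  unfolding marg_def by (rule sum_fun_apply)

lemma is_rel_supp_subset: "is_rel D A X R \<Longrightarrow> supp R \<subseteq> PiE X D"
  unfolding is_rel_def supp_def by blast

lemma is_rel_mono: "is_rel D A X R \<Longrightarrow> A \<subseteq> B \<Longrightarrow> is_rel D B X R"
  unfolding is_rel_def by blast

lemma KI_fin_subset_KI: "KI_fin I \<subseteq> KI I"
  unfolding KI_fin_def by blast

lemma KI_fin_eq_KI: "finite I \<Longrightarrow> KI_fin I = KI I"
  unfolding KI_fin_def KI_def by (auto intro: finite_subset)

lemma supp_marg_subset_PiE:
  assumes "supp W \<subseteq> PiE X D" "Z \<subseteq> X"
  shows "supp (marg W Z) \<subseteq> PiE Z D"
proof
  fix t assume "t \<in> supp (marg W Z)"
  then have "marg W Z t \<noteq> 0" unfolding supp_def by simp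
  then obtain r where "r \<in> supp W" "t = restrict r Z"
    unfolding marg_def using sum.not_neutral_contains_not_neutral by blast
  with assms show "t \<in> PiE Z D" by (auto simp: PiE_def Pi_def)
qed

lemma marg_in_KI: "(\<And>r. W r \<in> KI I) \<Longrightarrow> marg W Z t \<in> KI I"
  unfolding KI_def by (simp add: marg_apply)

lemma supp_lift_rel_subset: "supp (lift_rel D C X R) \<subseteq> PiE (insert C X) D"
  unfolding supp_def lift_rel_def by auto

lemma lift_rel_marg:
  fixes W :: "('a \<Rightarrow> 'v) \<Rightarrow> ('v \<Rightarrow> 'k::comm_monoid_add)"
  assumes W: "is_rel D A X W" and Z: "Z \<subseteq> X" and C: "C \<notin> X"
  shows "lift_rel D C Z (marg W Z) = marg (lift_rel D C X W) (insert C Z)"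
proof
  fix u
  let ?L = "lift_rel D C X W"
  show "lift_rel D C Z (marg W Z) u = marg ?L (insert C Z) u"
  proof (cases "u \<in> PiE (insert C Z) D")
    case False
    then have "u \<notin> supp (marg ?L (insert C Z))"
      using supp_marg_subset_PiE[OF supp_lift_rel_subset, of "insert C Z"] Z by blast
    with False show ?thesis unfolding lift_rel_def supp_def by simp
  next
    case u: True
    define i where "i = u C"
    have "lift_rel D C Z (marg W Z) u = (\<Sum>r\<in>{r \<in> supp W. restrict r Z = restrict u Z}. W r i)"
      using u unfolding lift_rel_def i_def by (simp add: marg_apply)
    also have "\<dots> = (\<Sum>r\<in>{r \<in> supp W. restrict r Z = restrict u Z \<and> W r i \<noteq> 0}. W r i)"
      using W unfolding is_rel_def by (intro sum.mono_neutral_right) auto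
    also have "\<dots> = (\<Sum>r0\<in>{r0 \<in> supp ?L. restrict r0 (insert C Z) = u}. ?L r0)"
    proof (rule sum.reindex_bij_witness[where i = "\<lambda>r0. restrict r0 X" and j = "\<lambda>r. r(C := i)"])
      fix r0 assume r0: "r0 \<in> {r0 \<in> supp ?L. restrict r0 (insert C Z) = u}"
      then have "r0 \<in> PiE (insert C X) D" "W (restrict r0 X) (r0 C) \<noteq> 0" "r0 C = i"
        unfolding supp_def lift_rel_def i_def by (auto split: if_splits)
      with r0 Z C show "(restrict r0 X)(C := i) = r0"
        and "restrict r0 X \<in> {r \<in> supp W. restrict r Z = restrict u Z \<and> W r i \<noteq> 0}"
        by (auto simp: supp_def Int_absorb1 insert_absorb)
    next
      fix r assume r: "r \<in> {r \<in> supp W. restrict r Z = restrict u Z \<and> W r i \<noteq> 0}"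
      then have "r \<in> PiE X D" using is_rel_supp_subset[OF W] by blast
      moreover have "i \<in> D C" using u i_def by auto
      ultimately have r_upd: "r(C := i) \<in> PiE (insert C X) D" "restrict (r(C := i)) X = r"
        using C by (auto simp: PiE_fun_upd)
      then show "restrict (r(C := i)) X = r" by simp
      show "?L (r(C := i)) = W r i" using r_upd unfolding lift_rel_def by simp
      have "C \<notin> Z" using C Z by blast
      then have "restrict (r(C := i)) (insert C Z) = (restrict u Z)(C := u C)"
        using r unfolding i_def by (simp flip: restrict_upd)
      then have "restrict (r(C := i)) (insert C Z) = u"
        using u \<open>C \<notin> Z\<close> by simp
      then show "r(C := i) \<in> {r0 \<in> supp ?L. restrict r0 (insert C Z) = u}"
        using r_upd r unfolding supp_def lift_rel_def by simp
    qed
    also have "\<dots> = marg ?L (insert C Z) u" unfolding marg_def by simp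
    finally show ?thesis .
  qed
qed

definition unlift_rel :: "('a \<Rightarrow> 'v set) \<Rightarrow> 'v set \<Rightarrow> 'a \<Rightarrow> 'a set \<Rightarrow> (('a \<Rightarrow> 'v) \<Rightarrow> 'k::zero)
    \<Rightarrow> ('a \<Rightarrow> 'v) \<Rightarrow> ('v \<Rightarrow> 'k)" where
  "unlift_rel D I C X W = (\<lambda>t. if t \<in> PiE X D then (\<lambda>i. if i \<in> I then W (t(C := i)) else 0) else 0)"

lemma cw_join_eq_unlift_rel:
  "cw_join D I J C X Y R S
    = unlift_rel D I C (X \<union> Y) (J (insert C X) (insert C Y) (lift_rel D C X R) (lift_rel D C Y S))"
  unfolding cw_join_def unlift_rel_def by simp

lemma lift_unlift_rel:
  assumes "supp W \<subseteq> PiE (insert C X) D" "C \<notin> X" "D C = I"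
  shows "lift_rel D C X (unlift_rel D I C X W) = W"
proof
  fix u show "lift_rel D C X (unlift_rel D I C X W) u = W u"
  proof (cases "u \<in> PiE (insert C X) D")
    case True
    then have "restrict u X \<in> PiE X D" "u C \<in> I" "(restrict u X)(C := u C) = u"
      using assms(2,3) by auto
    with True show ?thesis unfolding lift_rel_def unlift_rel_def by simp
  next
    case False
    with assms(1) show ?thesis unfolding lift_rel_def supp_def by auto
  qed
qed

lemma unlift_lift_rel:
  assumes "supp R \<subseteq> PiE X D" "\<And>t. R t \<in> KI I" "C \<notin> X" "D C = I"
  shows "unlift_rel D I C X (lift_rel D C X R) = R"
proof (intro ext)
  fix t i show "unlift_rel D I C X (lift_rel D C X R) t i = R t i"
  proof (cases "t \<in> PiE X D \<and> i \<in> I")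
    case True
    with assms(3,4) have "t(C := i) \<in> PiE (insert C X) D" "restrict (t(C := i)) X = t"
      by (auto simp: PiE_fun_upd)
    with True show ?thesis unfolding unlift_rel_def lift_rel_def by simp
  next
    case False
    have "R t = 0" if "t \<notin> PiE X D" using assms(1) that unfolding supp_def by blast
    moreover have "R t i = 0" if "i \<notin> I" using assms(2)[of t] that unfolding KI_def by blast
    ultimately show ?thesis using False unfolding unlift_rel_def by auto
  qed
qed

lemma supp_lift_rel_subset_image:
  assumes "C \<notin> X"
  shows "supp (lift_rel D C X R) \<subseteq> (\<lambda>(r, i). r(C := i)) ` (SIGMA r:supp R. {i. R r i \<noteq> 0})"
proof
  fix t assume "t \<in> supp (lift_rel D C X R)"
  then have "t \<in> PiE (insert C X) D" and nz: "R (restrict t X) (t C) \<noteq> 0"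
    unfolding supp_def lift_rel_def by (auto split: if_splits)
  with assms have "t = (\<lambda>(r, i). r(C := i)) (restrict t X, t C)" by simp
  moreover have "(restrict t X, t C) \<in> (SIGMA r:supp R. {i. R r i \<noteq> 0})"
    using nz by (auto simp: supp_def)
  ultimately show "t \<in> (\<lambda>(r, i). r(C := i)) ` (SIGMA r:supp R. {i. R r i \<noteq> 0})"
    by (rule image_eqI)
qed

lemma finite_Sigma_nonzero_components:
  "is_rel D (KI_fin I) X R \<Longrightarrow> finite (SIGMA r:supp R. {i. R r i \<noteq> 0})"
  unfolding is_rel_def KI_fin_def by (intro finite_SigmaI) auto

lemma is_rel_lift_rel:
  assumes "is_rel D (KI_fin I) X R" "C \<notin> X"
  shows "is_rel D UNIV (insert C X) (lift_rel D C X R)"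
proof -
  have "finite (supp (lift_rel D C X R))"
    using finite_Sigma_nonzero_components[OF assms(1)] supp_lift_rel_subset_image[OF assms(2)]
    by (rule finite_surj)
  with supp_lift_rel_subset[of D C X R] show ?thesis unfolding is_rel_def supp_def by blast
qed

lemma card_supp_lift_rel_le:
  assumes R: "is_rel D (KI_fin I) X R" and "C \<notin> X"
    and d: "\<forall>t \<in> supp R. real (card {i. R t i \<noteq> 0}) \<le> d"
  shows "real (card (supp (lift_rel D C X R))) \<le> real (card (supp R)) * d"
proof -
  let ?S = "SIGMA r:supp R. {i. R r i \<noteq> 0}"
  have "card (supp (lift_rel D C X R)) \<le> card ?S"
    using finite_Sigma_nonzero_components[OF R] supp_lift_rel_subset_image[OF assms(2)]
    by (rule surj_card_le)
  also have "\<dots> = (\<Sum>r\<in>supp R. card {i. R r i \<noteq> 0})"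
    using R unfolding is_rel_def KI_fin_def by (intro card_SigmaI) auto
  finally have "real (card (supp (lift_rel D C X R))) \<le> (\<Sum>r\<in>supp R. real (card {i. R r i \<noteq> 0}))"
    by (simp flip: of_nat_sum)
  also have "\<dots> \<le> real (card (supp R)) * d"
    using sum_bounded_above[of "supp R" "\<lambda>r. real (card {i. R r i \<noteq> 0})" d] d by simp
  finally show ?thesis .
qed

lemma supp_unlift_rel_subset:
  assumes "C \<notin> X"
  shows "supp (unlift_rel D I C X W) \<subseteq> (\<lambda>s. restrict s X) ` supp W"
proof
  fix t assume "t \<in> supp (unlift_rel D I C X W)"
  then obtain i where "t \<in> PiE X D" "W (t(C := i)) \<noteq> 0"
    unfolding supp_def unlift_rel_def by (auto split: if_splits simp: fun_eq_iff)
  with assms show "t \<in> (\<lambda>s. restrict s X) ` supp W"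
    by (intro image_eqI[where x = "t(C := i)"]) (auto simp: supp_def)
qed

lemma is_rel_unlift_rel:
  assumes W: "is_rel D A (insert C X) W" and "C \<notin> X"
  shows "is_rel D (KI_fin I) X (unlift_rel D I C X W)"
proof -
  have fin: "finite (supp W)" using W unfolding is_rel_def by blast
  have "{i. unlift_rel D I C X W t i \<noteq> 0} \<subseteq> (\<lambda>s. s C) ` supp W" for t
    unfolding unlift_rel_def supp_def by (auto split: if_splits intro: image_eqI[where x = "t(C := _)"])
  then have "finite {i. unlift_rel D I C X W t i \<noteq> 0}" for t
    using fin by (meson finite_imageI finite_subset)
  then have "unlift_rel D I C X W t \<in> KI_fin I" for t
    unfolding KI_fin_def KI_def by (simp add: unlift_rel_def)
  moreover have "finite (supp (unlift_rel D I C X W))"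
    using finite_surj[OF fin supp_unlift_rel_subset[OF assms(2)]] .
  ultimately show ?thesis unfolding is_rel_def unlift_rel_def supp_def by auto
qed

lemma card_supp_unlift_rel_le:
  assumes "finite (supp W)" "C \<notin> X"
  shows "card (supp (unlift_rel D I C X W)) \<le> card (supp W)"
  using assms(1) supp_unlift_rel_subset[OF assms(2)] by (rule surj_card_le)

lemma inner_cons_lift_rel:
  assumes "is_rel D A X R" "is_rel D A Y S" "C \<notin> X \<union> Y" "inner_cons X Y R S"
  shows "inner_cons (insert C X) (insert C Y) (lift_rel D C X R) (lift_rel D C Y S)"
proof -
  have XY: "insert C X \<inter> insert C Y = insert C (X \<inter> Y)" by blast
  have "marg (lift_rel D C X R) (insert C (X \<inter> Y)) = lift_rel D C (X \<inter> Y) (marg R (X \<inter> Y))"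
    using assms by (intro lift_rel_marg[symmetric]) auto
  also have "\<dots> = lift_rel D C (X \<inter> Y) (marg S (X \<inter> Y))"
    using assms(4) unfolding inner_cons_def by simp
  also have "\<dots> = marg (lift_rel D C Y S) (insert C (X \<inter> Y))"
    using assms by (intro lift_rel_marg) auto
  finally show ?thesis unfolding inner_cons_def XY .
qed

lemma marg_eq_unlift_rel_marg_lift_rel:
  assumes U: "is_rel D (KI I) X U" and "Z \<subseteq> X" "C \<notin> X" "D C = I"
  shows "marg U Z = unlift_rel D I C Z (marg (lift_rel D C X U) (insert C Z))"
proof -
  have "supp (marg U Z) \<subseteq> PiE Z D"
    using is_rel_supp_subset[OF U] assms(2) by (rule supp_marg_subset_PiE)
  moreover have "marg U Z t \<in> KI I" for t
    using U unfolding is_rel_def by (intro marg_in_KI) simp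
  ultimately have "marg U Z = unlift_rel D I C Z (lift_rel D C Z (marg U Z))"
    using assms(2-4) by (intro unlift_lift_rel[symmetric]) auto
  also have "\<dots> = unlift_rel D I C Z (marg (lift_rel D C X U) (insert C Z))"
    using assms by (simp add: lift_rel_marg)
  finally show ?thesis .
qed

lemma witness_unlift_rel:
  assumes C: "C \<notin> X \<union> Y" "D C = I"
    and R: "is_rel D (KI I) X R" and S: "is_rel D (KI I) Y S"
    and W: "witness D A (insert C X) (insert C Y) (lift_rel D C X R) (lift_rel D C Y S) W"
  shows "witness D (KI_fin I) X Y R S (unlift_rel D I C (X \<union> Y) W)"
proof -
  let ?U = "unlift_rel D I C (X \<union> Y) W"
  have W_rel: "is_rel D A (insert C (X \<union> Y)) W" using W unfolding witness_def by simp
  have U_rel: "is_rel D (KI_fin I) (X \<union> Y) ?U"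
    using W_rel C by (intro is_rel_unlift_rel) auto
  then have U_rel': "is_rel D (KI I) (X \<union> Y) ?U"
    using KI_fin_subset_KI by (rule is_rel_mono)
  have lift_U: "lift_rel D C (X \<union> Y) ?U = W"
    using is_rel_supp_subset[OF W_rel] C by (intro lift_unlift_rel) auto
  have "marg ?U X = unlift_rel D I C X (lift_rel D C X R)"
    using marg_eq_unlift_rel_marg_lift_rel[OF U_rel', of X] W C
    by (simp add: lift_U witness_def)
  also have "\<dots> = R"
    using is_rel_supp_subset[OF R] R C by (intro unlift_lift_rel) (auto simp: is_rel_def)
  finally have "marg ?U X = R" .
  moreover have "marg ?U Y = unlift_rel D I C Y (lift_rel D C Y S)"
    using marg_eq_unlift_rel_marg_lift_rel[OF U_rel', of Y] W C
    by (simp add: lift_U witness_def)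
  moreover have "\<dots> = S"
    using is_rel_supp_subset[OF S] S C by (intro unlift_lift_rel) (auto simp: is_rel_def)
  ultimately show ?thesis using U_rel unfolding witness_def by simp
qed

lemma cw_join_witness:
  assumes J: "icp_via D UNIV J" and C: "C \<notin> X \<union> Y" "D C = I"
    and "finite X" "finite Y"
    and R: "is_rel D (KI_fin I) X R" and S: "is_rel D (KI_fin I) Y S"
    and "inner_cons X Y R S"
  shows "witness D (KI_fin I) X Y R S (cw_join D I J C X Y R S)"
proof -
  have "witness D UNIV (insert C X) (insert C Y) (lift_rel D C X R) (lift_rel D C Y S)
      (J (insert C X) (insert C Y) (lift_rel D C X R) (lift_rel D C Y S))"
    using J assms unfolding icp_via_def
    by (simp add: is_rel_lift_rel inner_cons_lift_rel)
  moreover have "is_rel D (KI I) X R" "is_rel D (KI I) Y S"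
    using R S KI_fin_subset_KI by (auto intro: is_rel_mono)
  ultimately show ?thesis
    unfolding cw_join_eq_unlift_rel using C by (intro witness_unlift_rel) auto
qed

lemma card_supp_cw_join_le:
  assumes J: "icp_via D UNIV J" "sparse_via D UNIV J c" and "c \<ge> 0"
    and C: "C \<notin> X \<union> Y" and "finite X" "finite Y"
    and R: "is_rel D (KI_fin I) X R" and S: "is_rel D (KI_fin I) Y S"
    and "inner_cons X Y R S"
    and dR: "\<forall>t \<in> supp R. real (card {i. R t i \<noteq> 0}) \<le> d"
    and dS: "\<forall>t \<in> supp S. real (card {i. S t i \<noteq> 0}) \<le> d"
  shows "real (card (supp (cw_join D I J C X Y R S)))
    \<le> (real (card (supp R)) + real (card (supp S))) * (c * d)"
proof -
  let ?R0 = "lift_rel D C X R" and ?S0 = "lift_rel D C Y S"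
  let ?W0 = "J (insert C X) (insert C Y) ?R0 ?S0"
  have R0: "is_rel D UNIV (insert C X) ?R0" and S0: "is_rel D UNIV (insert C Y) ?S0"
    using R S C by (auto intro: is_rel_lift_rel)
  have ic0: "inner_cons (insert C X) (insert C Y) ?R0 ?S0"
    using R S C assms by (intro inner_cons_lift_rel) auto
  have "finite (supp ?W0)"
    using J(1) R0 S0 ic0 assms unfolding icp_via_def witness_def is_rel_def by simp
  have W0: "real (card (supp ?W0)) \<le> (real (card (supp ?R0)) + real (card (supp ?S0))) * c"
    using J(2) R0 S0 ic0 assms unfolding sparse_via_def by simp
  have "real (card (supp (cw_join D I J C X Y R S))) \<le> real (card (supp ?W0))"
    unfolding cw_join_eq_unlift_rel using C \<open>finite (supp ?W0)\<close> by (simp add: card_supp_unlift_rel_le)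
  also have "\<dots> \<le> (real (card (supp ?R0)) + real (card (supp ?S0))) * c" by (rule W0)
  also have "\<dots> \<le> (real (card (supp R)) * d + real (card (supp S)) * d) * c"
    using card_supp_lift_rel_le[OF R _ dR] card_supp_lift_rel_le[OF S _ dS] C \<open>c \<ge> 0\<close>
    by (intro mult_right_mono add_mono) auto
  finally show ?thesis by (simp add: algebra_simps)
qed

lemma icp_sparse_imp_sparse_join:
  assumes "icp_sparse D A"
  obtains J c where "c > 0" "icp_via D A J" "sparse_via D A J c"
proof -
  obtain c where "c > 0" and c: "\<And>X Y R S. finite X \<Longrightarrow> finite Y \<Longrightarrow> is_rel D A X R
      \<Longrightarrow> is_rel D A Y S \<Longrightarrow> inner_cons X Y R S \<Longrightarrow> \<exists>W. witness D A X Y R S W \<and>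
        real (card (supp W)) \<le> (real (card (supp R)) + real (card (supp S))) * c"
    using assms unfolding icp_sparse_def by blast
  define J where "J X Y R S = (SOME W. witness D A X Y R S W \<and>
      real (card (supp W)) \<le> (real (card (supp R)) + real (card (supp S))) * c)" for X Y R S
  have "witness D A X Y R S (J X Y R S) \<and>
      real (card (supp (J X Y R S))) \<le> (real (card (supp R)) + real (card (supp S))) * c"
    if "finite X" "finite Y" "is_rel D A X R" "is_rel D A Y S" "inner_cons X Y R S" for X Y R S
    unfolding J_def using c[OF that] by (rule someI_ex)
  then have "icp_via D A J" "sparse_via D A J c"
    unfolding icp_via_def sparse_via_def by blast+
  with \<open>c > 0\<close> show thesis by (rule that)
qed

lemma icp_sparse_KI:
  assumes "finite I" "I \<noteq> {}" and fresh: "\<And>X. finite X \<Longrightarrow> \<exists>C. C \<notin> X \<and> D C = I"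
    and "icp_sparse D (UNIV :: 'k::comm_monoid_add set)"
  shows "icp_sparse D (KI I :: ('v \<Rightarrow> 'k) set)"
proof -
  obtain c J where "c > 0" and J: "icp_via D (UNIV :: 'k set) J" "sparse_via D UNIV J c"
    by (rule icp_sparse_imp_sparse_join[OF assms(4)])
  have KI: "KI_fin I = (KI I :: ('v \<Rightarrow> 'k) set)" using assms(1) by (rule KI_fin_eq_KI)
  have "\<exists>W. witness D (KI I) X Y R S W \<and>
      real (card (supp W)) \<le> (real (card (supp R)) + real (card (supp S))) * (c * real (card I))"
    if fin: "finite X" "finite Y" and R: "is_rel D (KI I) X R" and S: "is_rel D (KI I) Y S"
      and ic: "inner_cons X Y R S" for X Y and R S :: "('a \<Rightarrow> 'v) \<Rightarrow> 'v \<Rightarrow> 'k"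
  proof -
    obtain C where C: "C \<notin> X \<union> Y" "D C = I" using fresh[of "X \<union> Y"] fin by auto
    have d: "\<forall>t \<in> supp T. real (card {i. T t i \<noteq> 0}) \<le> real (card I)"
      if "is_rel D (KI I) Z T" for Z and T :: "('a \<Rightarrow> 'v) \<Rightarrow> 'v \<Rightarrow> 'k"
    proof -
      have "{i. T t i \<noteq> 0} \<subseteq> I" for t using that unfolding is_rel_def KI_def by blast
      then show ?thesis using assms(1) by (simp add: card_mono)
    qed
    have R': "is_rel D (KI_fin I) X R" and S': "is_rel D (KI_fin I) Y S"
      using R S unfolding KI .
    have "witness D (KI I) X Y R S (cw_join D I J C X Y R S)"
      using cw_join_witness[OF J(1) C fin R' S' ic] unfolding KI .
    moreover have "real (card (supp (cw_join D I J C X Y R S)))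
        \<le> (real (card (supp R)) + real (card (supp S))) * (c * real (card I))"
      using \<open>c > 0\<close> by (intro card_supp_cw_join_le[OF J _ C(1) fin R' S' ic d[OF R] d[OF S]]) simp
    ultimately show ?thesis by blast
  qed
  moreover have "c * real (card I) > 0" using \<open>c > 0\<close> assms(1,2) by (simp add: card_gt_0_iff)
  ultimately show ?thesis unfolding icp_sparse_def by blast
qed

theorem proposition31:
  fixes D :: "'a \<Rightarrow> 'v set"
    and I :: "'v set"
    and J :: "'a set \<Rightarrow> 'a set \<Rightarrow> (('a \<Rightarrow> 'v) \<Rightarrow> 'k::comm_monoid_add) \<Rightarrow> (('a \<Rightarrow> 'v) \<Rightarrow> 'k)
              \<Rightarrow> (('a \<Rightarrow> 'v) \<Rightarrow> 'k)"
  assumes "I \<noteq> {}"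
    and "positive_monoid TYPE('k)"
    and "icp_via D UNIV J"
  shows "(\<forall>C X Y (R :: ('a \<Rightarrow> 'v) \<Rightarrow> ('v \<Rightarrow> 'k)) S. C \<notin> X \<union> Y \<longrightarrow> D C = I \<longrightarrow> finite X \<longrightarrow> finite Y
            \<longrightarrow> is_rel D (KI_fin I) X R \<longrightarrow> is_rel D (KI_fin I) Y S \<longrightarrow> inner_cons X Y R S
            \<longrightarrow> witness D (KI_fin I) X Y R S (cw_join D I J C X Y R S))
    \<and> (\<forall>c. c > 0 \<longrightarrow> sparse_via D UNIV J c \<longrightarrow>
         (\<forall>C X Y (R :: ('a \<Rightarrow> 'v) \<Rightarrow> ('v \<Rightarrow> 'k)) S (d::real). C \<notin> X \<union> Y \<longrightarrow> D C = I \<longrightarrow> finite X \<longrightarrow> finite Y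
            \<longrightarrow> is_rel D (KI_fin I) X R \<longrightarrow> is_rel D (KI_fin I) Y S \<longrightarrow> inner_cons X Y R S
            \<longrightarrow> (\<forall>t \<in> supp R. real (card {i. R t i \<noteq> 0}) \<le> d)
            \<longrightarrow> (\<forall>t \<in> supp S. real (card {i. S t i \<noteq> 0}) \<le> d)
            \<longrightarrow> real (card (supp (cw_join D I J C X Y R S)))
                  \<le> (real (card (supp R)) + real (card (supp S))) * (c * d)))
    \<and> (finite I \<longrightarrow> (\<forall>X. finite X \<longrightarrow> (\<exists>C. C \<notin> X \<and> D C = I))
         \<longrightarrow> icp_sparse D (UNIV :: 'k set) \<longrightarrow> icp_sparse D (KI I :: ('v \<Rightarrow> 'k) set))"
proof (intro conjI allI impI)
  show "witness D (KI_fin I) X Y R S (cw_join D I J C X Y R S)"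
    if "C \<notin> X \<union> Y" "D C = I" "finite X" "finite Y" "is_rel D (KI_fin I) X R"
      "is_rel D (KI_fin I) Y S" "inner_cons X Y R S"
    for C X Y and R S :: "('a \<Rightarrow> 'v) \<Rightarrow> 'v \<Rightarrow> 'k"
    using assms(3) that by (rule cw_join_witness)
  show "real (card (supp (cw_join D I J C X Y R S)))
      \<le> (real (card (supp R)) + real (card (supp S))) * (c * d)"
    if "c > 0" "sparse_via D UNIV J c" "C \<notin> X \<union> Y" "D C = I" "finite X" "finite Y"
      "is_rel D (KI_fin I) X R" "is_rel D (KI_fin I) Y S" "inner_cons X Y R S"
      "\<forall>t \<in> supp R. real (card {i. R t i \<noteq> 0}) \<le> d"
      "\<forall>t \<in> supp S. real (card {i. S t i \<noteq> 0}) \<le> d"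
    for c C X Y and R S :: "('a \<Rightarrow> 'v) \<Rightarrow> 'v \<Rightarrow> 'k" and d
    using assms(3) that by (intro card_supp_cw_join_le) auto
  show "icp_sparse D (KI I :: ('v \<Rightarrow> 'k) set)"
    if "finite I" "\<forall>X. finite X \<longrightarrow> (\<exists>C. C \<notin> X \<and> D C = I)" "icp_sparse D (UNIV :: 'k set)"
    using that assms(1) by (intro icp_sparse_KI) auto
qed

end
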